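(* Consider a hierarchical tensor factorization with mode tree $\mathcal T$ whose weight matrices evolve under gradient flow on $\phi_H$ for $t\ge0$. Let $\nu\in\mathrm{int}(\mathcal T)$ and $r\in[R_\nu]$. If there exists $t_0\ge0$ at which $w(t_0)=0$ for all $w\in\mathrm{LC}(\nu,r)$, then $w(t)=0$ for all $t\ge0$ and all $w\in\mathrm{LC}(\nu,r)$.
   Context: Fix $N\in\mathbb N$, $D_1,\dots,D_N\in\mathbb N$; $[K]:=\{1,\dots,K\}$; $\otimes$ the tensor product. A mode tree $\mathcal T$ over $[N]$ is a rooted tree whose nodes are labeled by subsets of $[N]$, with exactly $N$ leaves labeled $\{1\},\dots,\{N\}$, and where each interior node's label is the union of its children's labels; nodes are identified with labels, root $[N]$, $\mathrm{int}(\mathcal T)$ interior nodes, $Pa(\nu)$ parent, $C(\nu)$ children (fixed order). A hierarchical tensor factorization has $R_\nu\in\mathbb N$ ($\nu\in\mathrm{int}(\mathcal T)$), $R_{Pa([N])}:=1$, $R_{\{n\}}:=D_n$, weight matrices $W^{(\nu)}\in\mathbb R^{R_\nu\times R_{Pa(\nu)}}$. Intermediate tensors: $\mathcal W^{(\{n\},r)}:=W^{(\{n\})}_{:,r}$; for $\nu\in\mathrm{int}(\mathcal T)\setminus\{[N]\}$ (leaves to root), $r\in[R_{Pa(\nu)}]$: $\mathcal W^{(\nu,r)}:=\pi_\nu\big(\sum_{r'=1}^{R_\nu}W^{(\nu)}_{r',r}\bigotimes_{\nu_c\in C(\nu)}\mathcal W^{(\nu_c,r')}\big)$; end tensor $\mathcal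 W_H:=\pi_{[N]}\big(\sum_{r'=1}^{R_{[N]}}W^{([N])}_{r',1}\bigotimes_{\nu_c\in C([N])}\mathcal W^{(\nu_c,r')}\big)$, where $\pi_\nu$ permutes modes (ordered by children, each child's elements ascending) into ascending order of the elements of $\nu$. $\mathrm{LC}(\nu,r)$ is the collection of vectors $W^{(\nu)}_{r,:}$ and $W^{(\nu_c)}_{:,r}$, $\nu_c\in C(\nu)$. $\mathcal L_H:\mathbb R^{D_1\times\cdots\times D_N}\to\mathbb R_{\ge0}$ is differentiable and locally smooth (gradient Lipschitz on compact sets), $\phi_H((W^{(\nu)})_\nu):=\mathcal L_H(\mathcal W_H)$, gradient flow: $\frac{d}{dt}W^{(\nu)}(t)=-\frac{\partial}{\partial W^{(\nu)}}\phi_H((W^{(\nu')}(t))_{\nu'})$ for all $\nu\in\mathcal T$, $t\ge0$. *)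

theory Defs
  imports "HOL-Analysis.Analysis"
begin

datatype mtree = Leaf nat | Node "mtree list"

fun label :: "mtree \<Rightarrow> nat set" where
  "label (Leaf n) = {n}"
| "label (Node cs) = (\<Union>c\<in>set cs. label c)"

fun subtrees :: "mtree \<Rightarrow> mtree list" where
  "subtrees (Leaf n) = [Leaf n]"
| "subtrees (Node cs) = Node cs # concat (map subtrees cs)"

fun leaves :: "mtree \<Rightarrow> nat list" where
  "leaves (Leaf n) = [n]"
| "leaves (Node cs) = concat (map leaves cs)"

text \<open>Mode tree over [N]: root label [N], the leaves are exactly {1},...,{N} (each once),
interior nodes have children, and nodes are identified with their labels (labels distinct).\<close>

definition mode_tree :: "nat \<Rightarrow> mtree \<Rightarrow> bool" where
  "mode_tree N T \<longleftrightarrow>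
     label T = {1..N} \<and>
     mset (leaves T) = mset [1..<N+1] \<and>
     (\<forall>cs. Node cs \<in> set (subtrees T) \<longrightarrow> cs \<noteq> []) \<and>
     distinct (map label (subtrees T))"

text \<open>Nodes together with the number of columns of their weight matrix, i.e. R of the parent
(with R of the parent of the root being 1).\<close>

fun nodes_pc :: "(nat set \<Rightarrow> nat) \<Rightarrow> nat \<Rightarrow> mtree \<Rightarrow> (mtree \<times> nat) list" where
  "nodes_pc R p (Leaf n) = [(Leaf n, p)]"
| "nodes_pc R p (Node cs) = (Node cs, p) # concat (map (nodes_pc R (R (label (Node cs)))) cs)"

text \<open>Weights: \<open>\<theta> \<nu> i j\<close> is the entry (i,j) (0-based) of the matrix W^(\<nu>).
A tensor over the modes in a set \<nu> is represented as a function of a multi-index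
\<open>f :: nat \<Rightarrow> nat\<close> (f n is the index in mode n, 0-based); in this representation the mode
permutation \<pi>_\<nu> is the identity. \<open>tens R \<theta> t r\<close> is the intermediate tensor W^(t,r).\<close>

fun tens :: "(nat set \<Rightarrow> nat) \<Rightarrow> (nat set \<Rightarrow> nat \<Rightarrow> nat \<Rightarrow> real) \<Rightarrow> mtree \<Rightarrow> nat
             \<Rightarrow> (nat \<Rightarrow> nat) \<Rightarrow> real" where
  "tens R \<theta> (Leaf n) r f = \<theta> {n} (f n) r"
| "tens R \<theta> (Node cs) r f =
     (\<Sum>r'<R (label (Node cs)). \<theta> (label (Node cs)) r' r * prod_list (map (\<lambda>c. tens R \<theta> c r' f) cs))"

definition idx_set :: "nat \<Rightarrow> (nat \<Rightarrow> nat) \<Rightarrow> (nat \<Rightarrow> nat) set" where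
  "idx_set N D = {f. (\<forall>n\<in>{1..N}. f n < D n) \<and> (\<forall>n. n \<notin> {1..N} \<longrightarrow> f n = 0)}"

text \<open>The end tensor W_H, as an element of the Euclidean space \<open>real^'i\<close>, where the finite
type \<open>'i\<close> enumerates the valid multi-indices via \<open>idx\<close>.\<close>

definition end_tensor :: "('i::finite \<Rightarrow> nat \<Rightarrow> nat) \<Rightarrow> (nat set \<Rightarrow> nat) \<Rightarrow> mtree
    \<Rightarrow> (nat set \<Rightarrow> nat \<Rightarrow> nat \<Rightarrow> real) \<Rightarrow> real^'i" where
  "end_tensor idx R T \<theta> = (\<chi> k. tens R \<theta> T 0 (idx k))"

definition phiH :: "(real^'i \<Rightarrow> real) \<Rightarrow> ('i::finite \<Rightarrow> nat \<Rightarrow> nat) \<Rightarrow> (nat set \<Rightarrow> nat) \<Rightarrow> mtree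
    \<Rightarrow> (nat set \<Rightarrow> nat \<Rightarrow> nat \<Rightarrow> real) \<Rightarrow> real" where
  "phiH L idx R T \<theta> = L (end_tensor idx R T \<theta>)"

definition upd :: "(nat set \<Rightarrow> nat \<Rightarrow> nat \<Rightarrow> real) \<Rightarrow> nat set \<Rightarrow> nat \<Rightarrow> nat \<Rightarrow> real
    \<Rightarrow> (nat set \<Rightarrow> nat \<Rightarrow> nat \<Rightarrow> real)" where
  "upd \<theta> \<nu> i j s = \<theta>(\<nu> := (\<theta> \<nu>)(i := (\<theta> \<nu> i)(j := s)))"

definition gradient_flow :: "(real^'i \<Rightarrow> real) \<Rightarrow> ('i::finite \<Rightarrow> nat \<Rightarrow> nat) \<Rightarrow> (nat set \<Rightarrow> nat)
    \<Rightarrow> mtree \<Rightarrow> (real \<Rightarrow> nat set \<Rightarrow> nat \<Rightarrow> nat \<Rightarrow> real) \<Rightarrow> bool" where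
  "gradient_flow L idx R T \<Theta> \<longleftrightarrow>
     (\<forall>t\<ge>0. \<forall>(\<nu>, p)\<in>set (nodes_pc R 1 T). \<forall>i<R (label \<nu>). \<forall>j<p.
        ((\<lambda>s. \<Theta> s (label \<nu>) i j) has_real_derivative
           - deriv (\<lambda>x. phiH L idx R T (upd (\<Theta> t) (label \<nu>) i j x)) (\<Theta> t (label \<nu>) i j))
        (at t within {0..}))"

text \<open>The local component LC(\<nu>,r) for \<nu> = Node cs with R_Pa(\<nu>) = p vanishes.\<close>

definition LC_zero :: "(nat set \<Rightarrow> nat) \<Rightarrow> (nat set \<Rightarrow> nat \<Rightarrow> nat \<Rightarrow> real) \<Rightarrow> mtree list \<Rightarrow> nat
    \<Rightarrow> nat \<Rightarrow> bool" where
  "LC_zero R \<theta> cs p r \<longleftrightarrow>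
     (\<forall>j<p. \<theta> (label (Node cs)) r j = 0) \<and>
     (\<forall>c\<in>set cs. \<forall>i<R (label c). \<theta> (label c) i r = 0)"

definition grad :: "('a::euclidean_space \<Rightarrow> real) \<Rightarrow> 'a \<Rightarrow> 'a" where
  "grad L x = (\<Sum>b\<in>Basis. frechet_derivative L (at x) b *\<^sub>R b)"

end

theory Submission
  imports Defs
begin

text \<open>Let E(t) be the squared norm of the local component LC(\<nu>,r) at time t. The partial
  derivative of \<open>phi_H\<close> with respect to an entry of LC(\<nu>,r) is the derivative of the loss in
  the direction of the slope of the end tensor, which is affine in that entry. This slope vanishes
  when the other entries of LC(\<nu>,r) are zero: the r-th summand at \<nu> then carries a zero factor or
  a zero coefficient. Since the end tensor is Lipschitz in the weights on bounded sets, the slope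
  is O(sqrt E) along a bounded trajectory, hence |E'| \<le> C E on every bounded time interval, and a
  Gronwall argument forwards and backwards from t0 gives E = 0.\<close>

section \<open>Elementary estimates and a Gronwall-type lemma\<close>

lemma abs_le_sqrt_sum_squares:
  fixes f :: "'a \<Rightarrow> real"
  assumes "finite A" "a \<in> A"
  shows "\<bar>f a\<bar> \<le> sqrt (\<Sum>b\<in>A. (f b)\<^sup>2)"
proof -
  have "(f a)\<^sup>2 \<le> (\<Sum>b\<in>A. (f b)\<^sup>2)" using assms by (intro member_le_sum) auto
  then show ?thesis using real_sqrt_le_mono by fastforce
qed

lemma abs_mult_diff_le: "\<bar>a * x - b * y\<bar> \<le> \<bar>a\<bar> * \<bar>x - y\<bar> + \<bar>a - b\<bar> * \<bar>y::real\<bar>"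
proof -
  have "a * x - b * y = a * (x - y) + (a - b) * y" by (simp add: algebra_simps)
  then show ?thesis using abs_triangle_ineq[of "a * (x - y)" "(a - b) * y"] by (simp add: abs_mult)
qed

lemma abs_prod_list_le:
  fixes g :: "'a \<Rightarrow> real"
  assumes "\<forall>x\<in>set xs. \<bar>g x\<bar> \<le> B"
  shows "\<bar>prod_list (map g xs)\<bar> \<le> B ^ length xs"
  using assms
proof (induction xs)
  case (Cons x xs)
  then show ?case by (auto simp: abs_mult intro!: mult_mono)
qed simp

lemma abs_prod_list_diff_le:
  fixes g h :: "'a \<Rightarrow> real"
  assumes "1 \<le> B" "\<forall>x\<in>set xs. \<bar>g x\<bar> \<le> B \<and> \<bar>h x\<bar> \<le> B \<and> \<bar>g x - h x\<bar> \<le> D"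
  shows "\<bar>prod_list (map g xs) - prod_list (map h xs)\<bar> \<le> real (length xs) * B ^ length xs * D"
  using assms(2)
proof (induction xs)
  case (Cons x xs)
  let ?X = "prod_list (map g xs)" and ?Y = "prod_list (map h xs)" and ?n = "length xs"
  have x: "\<bar>g x\<bar> \<le> B" "\<bar>g x - h x\<bar> \<le> D" using Cons.prems by auto
  have Y: "\<bar>?Y\<bar> \<le> B ^ ?n" using abs_prod_list_le[of xs h B] Cons.prems by auto
  have "\<bar>g x * ?X - h x * ?Y\<bar> \<le> \<bar>g x\<bar> * \<bar>?X - ?Y\<bar> + \<bar>g x - h x\<bar> * \<bar>?Y\<bar>"
    by (rule abs_mult_diff_le)
  also have "\<dots> \<le> B * (real ?n * B ^ ?n * D) + D * B ^ ?n"
    using Cons x Y by (intro add_mono mult_mono) auto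
  also have "\<dots> \<le> real (Suc ?n) * (B * B ^ ?n) * D"
  proof -
    have "D * B ^ ?n \<le> D * (B * B ^ ?n)"
      using assms(1) x by (intro mult_left_mono) auto
    then show ?thesis by (simp add: algebra_simps)
  qed
  finally show ?case by simp
qed simp

lemma abs_mult_prod_list_diff_le:
  fixes g h :: "'a \<Rightarrow> real"
  assumes "\<bar>a\<bar> \<le> M" "\<bar>a - b\<bar> \<le> \<delta>" "1 \<le> B"
    and "\<forall>x\<in>set xs. \<bar>g x\<bar> \<le> B \<and> \<bar>h x\<bar> \<le> B \<and> \<bar>g x - h x\<bar> \<le> D"
  shows "\<bar>a * prod_list (map g xs) - b * prod_list (map h xs)\<bar>
    \<le> M * (real (length xs) * B ^ length xs * D) + \<delta> * B ^ length xs"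
proof -
  have "\<bar>a * prod_list (map g xs) - b * prod_list (map h xs)\<bar>
      \<le> \<bar>a\<bar> * \<bar>prod_list (map g xs) - prod_list (map h xs)\<bar> + \<bar>a - b\<bar> * \<bar>prod_list (map h xs)\<bar>"
    by (rule abs_mult_diff_le)
  also have "\<dots> \<le> M * (real (length xs) * B ^ length xs * D) + \<delta> * B ^ length xs"
    using assms abs_prod_list_diff_le[OF assms(3,4)] abs_prod_list_le[of xs h B]
    by (intro add_mono mult_mono) auto
  finally show ?thesis .
qed

lemma prod_list_lin_comb_single:
  fixes g1 g2 g3 :: "'a \<Rightarrow> 'b::comm_ring_1"
  assumes "\<forall>x\<in>set xs \<union> set ys. g1 x = g3 x \<and> g2 x = g3 x" "g3 d = \<alpha> * g1 d + \<beta> * g2 d"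
  shows "prod_list (map g3 (xs @ d # ys)) =
    \<alpha> * prod_list (map g1 (xs @ d # ys)) + \<beta> * prod_list (map g2 (xs @ d # ys))"
proof -
  have "map g1 xs = map g3 xs" "map g2 xs = map g3 xs" "map g1 ys = map g3 ys" "map g2 ys = map g3 ys"
    using assms(1) by (auto intro!: map_cong)
  then show ?thesis using assms(2) by (simp del: map_eq_conv add: algebra_simps)
qed

lemma norm_le_card_mult_cart:
  fixes x :: "real^'n"
  assumes "\<forall>k. \<bar>x $ k\<bar> \<le> c"
  shows "norm x \<le> real CARD('n) * c"
  using order_trans[OF norm_le_l1_cart sum_bounded_above[of UNIV "\<lambda>k. \<bar>x $ k\<bar>" c]] assms by simp

lemma deriv_along_line:
  fixes L :: "'a::euclidean_space \<Rightarrow> real"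
  assumes "L differentiable (at (A + x0 *\<^sub>R B))"
  shows "deriv (\<lambda>x. L (A + x *\<^sub>R B)) x0 = frechet_derivative L (at (A + x0 *\<^sub>R B)) B"
proof -
  define F where "F = frechet_derivative L (at (A + x0 *\<^sub>R B))"
  have dL: "(L has_derivative F) (at (A + x0 *\<^sub>R B))"
    using assms unfolding F_def by (simp add: frechet_derivative_works)
  have "((\<lambda>x. A + x *\<^sub>R B) has_derivative (\<lambda>h. h *\<^sub>R B)) (at x0)"
    by (auto intro!: derivative_eq_intros)
  from has_derivative_compose[OF this dL]
  have "((\<lambda>x. L (A + x *\<^sub>R B)) has_derivative (\<lambda>h. F (h *\<^sub>R B))) (at x0)" .
  moreover have "(\<lambda>h. F (h *\<^sub>R B)) = (*) (F B)"
    using linear_scale[OF has_derivative_linear[OF dL]] by (auto simp: fun_eq_iff)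
  ultimately have "((\<lambda>x. L (A + x *\<^sub>R B)) has_real_derivative F B) (at x0)"
    unfolding has_field_derivative_def by simp
  then show ?thesis unfolding F_def by (rule DERIV_imp_deriv)
qed

lemma abs_frechet_derivative_le:
  fixes L :: "'a::euclidean_space \<Rightarrow> real"
  assumes "L differentiable (at y)"
  shows "\<bar>frechet_derivative L (at y) v\<bar> \<le> norm (grad L y) * norm v"
proof -
  define F where "F = frechet_derivative L (at y)"
  have lin: "linear F" using assms unfolding F_def by (rule linear_frechet_derivative)
  have "F v = F (\<Sum>b\<in>Basis. (v \<bullet> b) *\<^sub>R b)" by (simp add: euclidean_representation)
  also have "\<dots> = (\<Sum>b\<in>Basis. (v \<bullet> b) * F b)"
    by (simp add: linear_sum[OF lin] linear_scale[OF lin])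
  also have "\<dots> = v \<bullet> grad L y"
    unfolding grad_def F_def by (simp add: inner_sum_right mult.commute)
  finally show ?thesis
    unfolding F_def using Cauchy_Schwarz_ineq2[of v "grad L y"] by (simp add: mult.commute)
qed

lemma bounded_image_if_lipschitz_on_compacts:
  assumes "\<forall>K. compact K \<longrightarrow> (\<exists>C. lipschitz_on C K g)" "compact S"
  shows "bounded (g ` S)"
proof -
  obtain C where "lipschitz_on C S g" using assms by blast
  then have "continuous_on S g" by (rule lipschitz_on_continuous_on)
  then show ?thesis using assms(2) by (intro compact_imp_bounded compact_continuous_image)
qed

lemma DERIV_mult_exp:
  assumes "(f has_real_derivative f') (at x)"
  shows "((\<lambda>s. f s * exp (k * s)) has_real_derivative (f' + k * f x) * exp (k * x)) (at x)"
proof -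
  have "((\<lambda>s. exp (k * s)) has_real_derivative exp (k * x) * k) (at x)"
    by (auto intro!: derivative_eq_intros)
  from DERIV_mult[OF assms this] show ?thesis by (simp add: algebra_simps)
qed

lemma nonneg_vanishes_if_abs_deriv_le:
  fixes E E' :: "real \<Rightarrow> real"
  assumes der: "\<And>t. 0 \<le> t \<Longrightarrow> (E has_real_derivative E' t) (at t within {0..})"
    and bound: "\<And>t. 0 \<le> t \<Longrightarrow> t \<le> Tm \<Longrightarrow> \<bar>E' t\<bar> \<le> C * E t"
    and nonneg: "\<And>t. 0 \<le> t \<Longrightarrow> 0 \<le> E t"
    and t0: "0 \<le> t0" "t0 \<le> Tm" "E t0 = 0" and t: "0 \<le> t" "t \<le> Tm"
  shows "E t = 0"
proof -
  have cont: "continuous_on {a..b} (\<lambda>s. E s * exp (k * s))" if "0 \<le> a" for a b k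
  proof -
    have "continuous_on {0..} E" by (rule DERIV_continuous_on[of _ _ E'], rule der) simp
    moreover have "{a..b} \<subseteq> {0..}" using that by auto
    ultimately have "continuous_on {a..b} E" by (rule continuous_on_subset)
    then show ?thesis by (intro continuous_intros)
  qed
  have weighted: "((\<lambda>s. E s * exp (k * s)) has_real_derivative (E' x + k * E x) * exp (k * x)) (at x)"
    if "0 < x" for x k
  proof (rule DERIV_mult_exp)
    have "(E has_real_derivative E' x) (at x within {0<..})"
      by (rule has_field_derivative_subset[OF der[of x]]) (use that in auto)
    moreover have "at x within {0<..} = at x" using that by (intro at_within_open) auto
    ultimately show "(E has_real_derivative E' x) (at x)" by simp
  qed
  \<comment> \<open>After t0 the function \<open>E s * exp (- C * s)\<close> is nonincreasing, before t0 the function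
    \<open>E s * exp (C * s)\<close> is nondecreasing; both vanish at t0.\<close>
  obtain k where "E t * exp (k * t) \<le> 0"
  proof (cases "t0 \<le> t")
    case True
    have "E t * exp (- C * t) \<le> E t0 * exp (- C * t0)"
    proof (rule DERIV_nonpos_imp_decreasing_open[OF True _ cont[OF t0(1)]])
      fix x assume x: "t0 < x" "x < t"
      then have "E' x \<le> C * E x" using bound[of x] t0 t by (simp add: abs_le_iff)
      then have "(E' x + - C * E x) * exp (- C * x) \<le> 0" by (simp add: mult_nonpos_nonneg)
      with weighted[of x "- C"] x(1) t0(1)
      show "\<exists>y. ((\<lambda>s. E s * exp (- C * s)) has_real_derivative y) (at x) \<and> y \<le> 0" by auto
    qed
    then show ?thesis using t0(3) that[of "- C"] by simp
  next
    case False
    have "E t * exp (C * t) \<le> E t0 * exp (C * t0)"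
    proof (rule DERIV_nonneg_imp_increasing_open[of t t0 _, OF _ _ cont[OF t(1)]])
      fix x assume x: "t < x" "x < t0"
      then have "- C * E x \<le> E' x" using bound[of x] t0 t by (simp add: abs_le_iff)
      then have "0 \<le> (E' x + C * E x) * exp (C * x)" by simp
      with weighted[of x C] x(1) t(1)
      show "\<exists>y. ((\<lambda>s. E s * exp (C * s)) has_real_derivative y) (at x) \<and> 0 \<le> y" by auto
    qed (use False in simp)
    then show ?thesis using t0(3) that[of C] by simp
  qed
  then have "E t \<le> 0" using mult_le_0_iff[of "E t"] by auto
  then show ?thesis using nonneg[OF t(1)] by simp
qed

lemma vanishes_if_abs_deriv_le_norm:
  fixes X X' :: "real \<Rightarrow> 'a \<Rightarrow> real"
  assumes A: "finite A"
    and der: "\<And>a t. a \<in> A \<Longrightarrow> 0 \<le> t \<Longrightarrow> ((\<lambda>s. X s a) has_real_derivative X' t a) (at t within {0..})"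
    and bound: "\<And>a t. a \<in> A \<Longrightarrow> 0 \<le> t \<Longrightarrow> t \<le> Tm \<Longrightarrow> \<bar>X' t a\<bar> \<le> C * sqrt (\<Sum>b\<in>A. (X t b)\<^sup>2)"
    and t0: "0 \<le> t0" "t0 \<le> Tm" "\<And>a. a \<in> A \<Longrightarrow> X t0 a = 0"
    and t: "0 \<le> t" "t \<le> Tm" and a: "a \<in> A"
  shows "X t a = 0"
proof -
  define E where "E s = (\<Sum>b\<in>A. (X s b)\<^sup>2)" for s
  define E' where "E' s = (\<Sum>b\<in>A. 2 * X s b * X' s b)" for s
  have "(E has_real_derivative E' s) (at s within {0..})" if "0 \<le> s" for s
    unfolding E_def[abs_def] E'_def
  proof (rule DERIV_sum)
    fix b assume "b \<in> A"
    from DERIV_mult[OF der[OF this that] der[OF this that]]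
    show "((\<lambda>s. (X s b)\<^sup>2) has_real_derivative 2 * X s b * X' s b) (at s within {0..})"
      by (simp add: power2_eq_square algebra_simps)
  qed
  moreover have E_nonneg: "0 \<le> E s" for s unfolding E_def by (simp add: sum_nonneg)
  moreover have "\<bar>E' s\<bar> \<le> (2 * C * card A) * E s" if "0 \<le> s" "s \<le> Tm" for s
  proof -
    have "\<bar>2 * X s b * X' s b\<bar> \<le> 2 * C * E s" if "b \<in> A" for b
    proof -
      have "\<bar>X s b\<bar> * \<bar>X' s b\<bar> \<le> sqrt (E s) * \<bar>X' s b\<bar>"
        unfolding E_def by (rule mult_right_mono[OF abs_le_sqrt_sum_squares[OF A that] abs_ge_zero])
      also have "\<dots> \<le> sqrt (E s) * (C * sqrt (E s))"
        using bound[OF that \<open>0 \<le> s\<close> \<open>s \<le> Tm\<close>] unfolding E_def[symmetric]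
        by (rule mult_left_mono) (simp add: E_nonneg)
      also have "\<dots> = C * E s"
        by (metis E_nonneg abs_of_nonneg mult.left_commute real_sqrt_mult_self)
      finally show ?thesis by (simp add: abs_mult)
    qed
    then have "\<bar>E' s\<bar> \<le> real (card A) * (2 * C * E s)"
      unfolding E'_def by (intro order_trans[OF sum_abs sum_bounded_above]) simp
    then show ?thesis by (simp add: algebra_simps)
  qed
  moreover have "E t0 = 0" unfolding E_def using t0(3) by simp
  ultimately have "E t = 0"
    using nonneg_vanishes_if_abs_deriv_le[of E E' Tm "2 * C * card A" t0 t] t0(1,2) t by blast
  then show ?thesis using abs_le_sqrt_sum_squares[OF A a, of "X t"] unfolding E_def by simp
qed

definition wf_mtree :: "mtree \<Rightarrow> bool" where
  "wf_mtree s \<longleftrightarrow> distinct (leaves s) \<and> (\<forall>cs. Node cs \<in> set (subtrees s) \<longrightarrow> cs \<noteq> []) \<and>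
     distinct (map label (subtrees s))"

lemma label_eq_set_leaves: "label s = set (leaves s)"
  by (induction s) auto

lemma mode_tree_wf: "mode_tree N T \<Longrightarrow> wf_mtree T"
  unfolding mode_tree_def wf_mtree_def
  using mset_eq_imp_distinct_iff[of "leaves T" "[1..<N+1]"] by simp

lemma mode_tree_leaves: "mode_tree N T \<Longrightarrow> set (leaves T) = {1..N}"
  unfolding mode_tree_def label_eq_set_leaves by blast

lemma self_in_subtrees: "s \<in> set (subtrees s)"
  by (cases s) auto

lemma label_subtree_subset: "x \<in> set (subtrees s) \<Longrightarrow> label x \<subseteq> label s"
  by (induction s) auto

lemma wf_mtree_child:
  assumes "wf_mtree (Node ds)" "d \<in> set ds"
  shows "wf_mtree d" and "label d \<noteq> label (Node ds)"
proof -
  obtain xs ys where ds: "ds = xs @ d # ys" using split_list[OF assms(2)] by blast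
  show "wf_mtree d" using assms unfolding wf_mtree_def ds by (auto simp: map_concat)
  have "label (Node ds) \<notin> label ` set (subtrees d)"
    using assms(1) unfolding wf_mtree_def ds by (simp add: map_concat)
  then show "label d \<noteq> label (Node ds)" using self_in_subtrees[of d] by blast
qed

lemma wf_mtree_subtree: "wf_mtree s \<Longrightarrow> x \<in> set (subtrees s) \<Longrightarrow> wf_mtree x"
proof (induction s)
  case (Node ds)
  then show ?case using wf_mtree_child(1) by (cases "x = Node ds") auto
qed simp

lemma wf_mtree_label_nonempty: "wf_mtree s \<Longrightarrow> label s \<noteq> {}"
proof (induction s)
  case (Node ds)
  then obtain d where "d \<in> set ds"
    unfolding wf_mtree_def using self_in_subtrees[of "Node ds"] by fastforce
  then show ?case using Node wf_mtree_child(1) by fastforce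
qed simp

lemma wf_mtree_siblings_disjoint:
  assumes "wf_mtree (Node ds)" "ds = xs @ d # ys" "d' \<in> set xs \<union> set ys"
  shows "label d \<inter> label d' = {}"
proof -
  have "distinct (concat (map leaves xs) @ leaves d @ concat (map leaves ys))"
    using assms(1,2) unfolding wf_mtree_def by simp
  then show ?thesis using assms(3) unfolding label_eq_set_leaves distinct_append by auto
qed

lemma label_below_child_ne:
  assumes "wf_mtree (Node ds)" "d \<in> set ds" "x \<in> set (subtrees d)"
  shows "label x \<noteq> label (Node ds)"
  using label_subtree_subset[OF assms(3)] wf_mtree_child(2)[OF assms(1,2)] assms(2) by auto

lemma label_below_sibling_not_subset:
  assumes "wf_mtree (Node ds)" "ds = xs @ d # ys" "d' \<in> set xs \<union> set ys" "x \<in> set (subtrees d')"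
  shows "\<not> label x \<subseteq> label d"
proof -
  have "d' \<in> set ds" using assms(2,3) by auto
  then have "label x \<noteq> {}"
    using wf_mtree_label_nonempty wf_mtree_subtree wf_mtree_child(1) assms(1,4) by blast
  then show ?thesis
    using wf_mtree_siblings_disjoint[OF assms(1-3)] label_subtree_subset[OF assms(4)] by blast
qed

lemma label_below_sibling_ne:
  assumes "wf_mtree (Node ds)" "c \<in> set ds" "c0 \<in> set ds" "c \<noteq> c0" "x \<in> set (subtrees c)"
  shows "label x \<noteq> label c0"
proof -
  obtain xs ys where ds: "ds = xs @ c0 # ys" using split_list[OF assms(3)] by blast
  then have "c \<in> set xs \<union> set ys" using assms(2,4) by auto
  then show ?thesis using label_below_sibling_not_subset[OF assms(1) ds _ assms(5)] by blast
qed

lemma nodes_pc_subtree: "(x, q) \<in> set (nodes_pc R P s) \<Longrightarrow> x \<in> set (subtrees s)"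
  by (induction s arbitrary: P) auto

lemma nodes_pc_head: "(s, P) \<in> set (nodes_pc R P s)"
  by (cases s) auto

lemma nodes_pc_smaller:
  "(x, q) \<in> set (nodes_pc R P s) \<Longrightarrow> (x = s \<and> q = P) \<or> size x < size s"
proof (induction s arbitrary: P)
  case (Node ds)
  show ?case
  proof (cases "(x, q) = (Node ds, P)")
    case False
    then obtain d where d: "d \<in> set ds" "(x, q) \<in> set (nodes_pc R (R (label (Node ds))) d)"
      using Node.prems by auto
    have "size d < size (Node ds)" using d(1) by (induction ds) auto
    then show ?thesis using Node.IH[OF d] by auto
  qed simp
qed simp

lemma nodes_pc_self: "(s, q) \<in> set (nodes_pc R P s) \<Longrightarrow> q = P"
  using nodes_pc_smaller by blast

lemma nodes_pc_child:
  "(Node cs, p) \<in> set (nodes_pc R P s) \<Longrightarrow> c \<in> set cs \<Longrightarrow>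
    (c, R (label (Node cs))) \<in> set (nodes_pc R P s)"
proof (induction s arbitrary: P)
  case (Node ds)
  then show ?case using nodes_pc_head[where s=c and R=R] by (cases "(Node cs, p) = (Node ds, P)") auto
qed simp

section \<open>Multilinearity of the hierarchical tensor\<close>

definition LC_entries :: "(nat set \<Rightarrow> nat) \<Rightarrow> mtree list \<Rightarrow> nat \<Rightarrow> nat \<Rightarrow> (nat set \<times> nat \<times> nat) set" where
  "LC_entries R cs p r =
     {label (Node cs)} \<times> {r} \<times> {..<p} \<union> (\<Union>c\<in>set cs. {label c} \<times> {..<R (label c)} \<times> {r})"

lemma finite_LC_entries: "finite (LC_entries R cs p r)"
  unfolding LC_entries_def by auto

lemma LC_zero_iff:
  "LC_zero R \<theta> cs p r \<longleftrightarrow> (\<forall>\<mu> i j. (\<mu>, i, j) \<in> LC_entries R cs p r \<longrightarrow> \<theta> \<mu> i j = 0)"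
  unfolding LC_zero_def LC_entries_def by (auto simp del: label.simps)

lemma upd_apply: "upd \<theta> \<mu> i j x \<mu>' a b = (if \<mu>' = \<mu> \<and> a = i \<and> b = j then x else \<theta> \<mu>' a b)"
  unfolding upd_def by auto

lemma upd_triv: "upd \<theta> \<mu> i j (\<theta> \<mu> i j) = \<theta>"
  unfolding upd_def by auto

lemma tens_cong:
  "(\<forall>x\<in>set (subtrees s). \<theta> (label x) = \<theta>' (label x)) \<Longrightarrow> tens R \<theta> s q f = tens R \<theta>' s q f"
proof (induction s arbitrary: q)
  case (Node ds)
  then have "map (\<lambda>c. tens R \<theta> c r' f) ds = map (\<lambda>c. tens R \<theta>' c r' f) ds" for r'
    by (intro map_cong) auto
  moreover have "\<theta> (label (Node ds)) = \<theta>' (label (Node ds))" using Node.prems by simp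
  ultimately show ?case by (simp only: tens.simps)
qed simp

lemma tens_zero_weights: "tens R (\<lambda>_ _ _. 0) s q f = 0"
  by (cases s) simp_all

lemma tens_column_zero:
  assumes "\<forall>i<R (label c). \<theta> (label c) i r = 0" "\<forall>n\<in>set (leaves c). f n < R {n}"
  shows "tens R \<theta> c r f = 0"
  using assms by (cases c) auto

lemma tens_lin_comb_lift:
  assumes "wf_mtree s" "(u, P') \<in> set (nodes_pc R P s)"
    and outside: "\<forall>\<mu>. \<mu> \<notin> label ` set (subtrees u) \<longrightarrow> \<theta>1 \<mu> = \<theta>3 \<mu> \<and> \<theta>2 \<mu> = \<theta>3 \<mu>"
    and "\<forall>q<P'. tens R \<theta>3 u q f = \<alpha> * tens R \<theta>1 u q f + \<beta> * tens R \<theta>2 u q f"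
    and "q < P"
  shows "tens R \<theta>3 s q f = \<alpha> * tens R \<theta>1 s q f + \<beta> * tens R \<theta>2 s q f"
  using assms
proof (induction s arbitrary: P q)
  case (Node ds)
  show ?case
  proof (cases "u = Node ds")
    case True
    then show ?thesis using Node.prems nodes_pc_self by blast
  next
    case False
    define S where "S = label (Node ds)"
    obtain d where d: "d \<in> set ds" "(u, P') \<in> set (nodes_pc R (R S) d)"
      using Node.prems(2) False unfolding S_def by auto
    obtain xs ys where ds: "ds = xs @ d # ys" using split_list[OF d(1)] by blast
    have below_d: "label x \<subseteq> label d" if "x \<in> set (subtrees u)" for x
      using label_subtree_subset[OF nodes_pc_subtree[OF d(2)]] label_subtree_subset[OF that] by blast
    have siblings: "tens R \<theta>1 d' r' f = tens R \<theta>3 d' r' f \<and> tens R \<theta>2 d' r' f = tens R \<theta>3 d' r' f"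
      if d': "d' \<in> set xs \<union> set ys" for d' r'
    proof -
      have "label x \<notin> label ` set (subtrees u)" if "x \<in> set (subtrees d')" for x
        using label_below_sibling_not_subset[OF Node.prems(1) ds d' that] below_d by blast
      then show ?thesis using outside by (auto intro: tens_cong)
    qed
    have "S \<notin> label ` set (subtrees u)"
      using below_d wf_mtree_child(2)[OF Node.prems(1) d(1)] d(1) unfolding S_def by fastforce
    then have top: "\<theta>1 S = \<theta>3 S" "\<theta>2 S = \<theta>3 S" using outside by auto
    have child: "\<forall>q<R S. tens R \<theta>3 d q f = \<alpha> * tens R \<theta>1 d q f + \<beta> * tens R \<theta>2 d q f"
      using Node.IH[OF d(1) wf_mtree_child(1)[OF Node.prems(1) d(1)] d(2)] Node.prems(3,4) by blast
    have "prod_list (map (\<lambda>c. tens R \<theta>3 c r' f) ds) =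
        \<alpha> * prod_list (map (\<lambda>c. tens R \<theta>1 c r' f) ds) + \<beta> * prod_list (map (\<lambda>c. tens R \<theta>2 c r' f) ds)"
      if "r' < R S" for r'
      unfolding ds by (rule prod_list_lin_comb_single) (use siblings child that in auto)
    then have "tens R \<theta>3 (Node ds) q f = (\<Sum>r'<R S. \<theta>3 S r' q *
        (\<alpha> * prod_list (map (\<lambda>c. tens R \<theta>1 c r' f) ds) + \<beta> * prod_list (map (\<lambda>c. tens R \<theta>2 c r' f) ds)))"
      by (simp only: tens.simps S_def[symmetric]) (auto intro: sum.cong)
    also have "\<dots> = \<alpha> * tens R \<theta>1 (Node ds) q f + \<beta> * tens R \<theta>2 (Node ds) q f"
      by (simp only: tens.simps S_def[symmetric] top)
        (simp add: algebra_simps sum.distrib sum_distrib_left)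
    finally show ?thesis .
  qed
qed simp

lemma tens_eq_lift:
  assumes "wf_mtree s" "(u, P') \<in> set (nodes_pc R P s)"
    and "\<forall>\<mu>. \<mu> \<notin> label ` set (subtrees u) \<longrightarrow> \<theta> \<mu> = \<theta>' \<mu>"
    and "\<forall>q<P'. tens R \<theta> u q f = tens R \<theta>' u q f" and "q < P"
  shows "tens R \<theta> s q f = tens R \<theta>' s q f"
  using tens_lin_comb_lift[OF assms(1,2), of \<theta>' \<theta> \<theta> f 1 0 q] assms(3-5) by simp

lemma tens_lin_comb_top:
  assumes "wf_mtree u"
    and below: "\<forall>x\<in>set (subtrees u). label x \<noteq> label u \<longrightarrow>
      \<theta>1 (label x) = \<theta>3 (label x) \<and> \<theta>2 (label x) = \<theta>3 (label x)"
    and top: "\<forall>a. \<theta>3 (label u) a q = \<alpha> * \<theta>1 (label u) a q + \<beta> * \<theta>2 (label u) a q"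
  shows "tens R \<theta>3 u q f = \<alpha> * tens R \<theta>1 u q f + \<beta> * tens R \<theta>2 u q f"
proof (cases u)
  case (Leaf n)
  then show ?thesis using top by simp
next
  case (Node ds)
  define S where "S = label (Node ds)"
  have "tens R \<theta>1 d r' f = tens R \<theta>3 d r' f \<and> tens R \<theta>2 d r' f = tens R \<theta>3 d r' f"
    if "d \<in> set ds" for d r'
    using below label_below_child_ne[OF assms(1)[unfolded Node] that] that Node
    by (auto intro!: tens_cong)
  then have "map (\<lambda>c. tens R \<theta>1 c r' f) ds = map (\<lambda>c. tens R \<theta>3 c r' f) ds"
    "map (\<lambda>c. tens R \<theta>2 c r' f) ds = map (\<lambda>c. tens R \<theta>3 c r' f) ds" for r'
    by (auto intro!: map_cong)
  moreover have "\<theta>3 S a q = \<alpha> * \<theta>1 S a q + \<beta> * \<theta>2 S a q" for a using top Node S_def by simp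
  ultimately show ?thesis unfolding Node
    by (simp only: tens.simps S_def[symmetric]) (simp add: algebra_simps sum.distrib sum_distrib_left)
qed

lemma tens_upd_affine:
  assumes "wf_mtree T" "(u, P') \<in> set (nodes_pc R P T)" "q < P"
  shows "tens R (upd \<theta> (label u) i j x) T q f =
    (1 - x) * tens R (upd \<theta> (label u) i j 0) T q f + x * tens R (upd \<theta> (label u) i j 1) T q f"
proof (rule tens_lin_comb_lift[OF assms(1,2) _ _ assms(3)])
  show "\<forall>\<mu>. \<mu> \<notin> label ` set (subtrees u) \<longrightarrow>
      upd \<theta> (label u) i j 0 \<mu> = upd \<theta> (label u) i j x \<mu> \<and> upd \<theta> (label u) i j 1 \<mu> = upd \<theta> (label u) i j x \<mu>"
    using self_in_subtrees[of u] unfolding upd_def by auto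
  have "wf_mtree u" using wf_mtree_subtree[OF assms(1) nodes_pc_subtree[OF assms(2)]] .
  then show "\<forall>q<P'. tens R (upd \<theta> (label u) i j x) u q f =
      (1 - x) * tens R (upd \<theta> (label u) i j 0) u q f + x * tens R (upd \<theta> (label u) i j 1) u q f"
    by (intro allI impI tens_lin_comb_top) (auto simp: upd_def algebra_simps)
qed

lemma tens_upd_LC_row:
  assumes wT: "wf_mtree T" and nu: "(Node cs, p) \<in> set (nodes_pc R P T)"
    and cols: "\<forall>c\<in>set cs. \<forall>i<R (label c). \<theta> (label c) i r = 0"
    and f: "\<forall>n\<in>set (leaves T). f n < R {n}" and q: "q < P"
  shows "tens R (upd \<theta> (label (Node cs)) r j x) T q f = tens R \<theta> T q f"
proof (rule tens_eq_lift[OF wT nu _ _ q])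
  define V where "V = label (Node cs)"
  define \<theta>x where "\<theta>x = upd \<theta> V r j x"
  show "\<forall>\<mu>. \<mu> \<notin> label ` set (subtrees (Node cs)) \<longrightarrow> upd \<theta> (label (Node cs)) r j x \<mu> = \<theta> \<mu>"
    using self_in_subtrees[of "Node cs"] unfolding upd_def by auto
  have w0: "wf_mtree (Node cs)" using wf_mtree_subtree[OF wT nodes_pc_subtree[OF nu]] .
  have children: "map (\<lambda>c. tens R \<theta>x c r' f) cs = map (\<lambda>c. tens R \<theta> c r' f) cs" for r'
    using label_below_child_ne[OF w0] unfolding \<theta>x_def V_def upd_def
    by (auto intro!: map_cong tens_cong)
  have column_zero: "tens R \<theta> c r f = 0" if c: "c \<in> set cs" for c
  proof (rule tens_column_zero)
    show "\<forall>i<R (label c). \<theta> (label c) i r = 0" using cols c by blast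
    have "c \<in> set (subtrees T)" using nodes_pc_subtree[OF nodes_pc_child[OF nu c]] .
    then show "\<forall>n\<in>set (leaves c). f n < R {n}"
      using f label_subtree_subset unfolding label_eq_set_leaves by blast
  qed
  have "cs \<noteq> []" using w0 self_in_subtrees[of "Node cs"] unfolding wf_mtree_def by blast
  then obtain c where "c \<in> set cs" by (cases cs) auto
  then have column_r: "prod_list (map (\<lambda>c. tens R \<theta> c r f) cs) = 0"
    unfolding prod_list_zero_iff using column_zero by (metis image_eqI list.set_map)
  have "\<theta>x V r' q' * prod_list (map (\<lambda>c. tens R \<theta> c r' f) cs) =
      \<theta> V r' q' * prod_list (map (\<lambda>c. tens R \<theta> c r' f) cs)" for r' q'
    by (cases "r' = r") (auto simp: column_r \<theta>x_def upd_apply)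
  then show "\<forall>q'<p. tens R (upd \<theta> (label (Node cs)) r j x) (Node cs) q' f = tens R \<theta> (Node cs) q' f"
    unfolding \<theta>x_def[symmetric] V_def[symmetric] by (simp only: tens.simps V_def[symmetric] children) simp
qed

lemma tens_upd_LC_col:
  assumes wT: "wf_mtree T" and nu: "(Node cs, p) \<in> set (nodes_pc R P T)" and c0: "c0 \<in> set cs"
    and row: "\<forall>q<p. \<theta> (label (Node cs)) r q = 0" and q: "q < P"
  shows "tens R (upd \<theta> (label c0) i r x) T q f = tens R \<theta> T q f"
proof (rule tens_eq_lift[OF wT nu _ _ q])
  define V where "V = label (Node cs)"
  define \<theta>x where "\<theta>x = upd \<theta> (label c0) i r x"
  show "\<forall>\<mu>. \<mu> \<notin> label ` set (subtrees (Node cs)) \<longrightarrow> upd \<theta> (label c0) i r x \<mu> = \<theta> \<mu>"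
    using c0 self_in_subtrees[of c0] unfolding upd_def by auto
  have w0: "wf_mtree (Node cs)" using wf_mtree_subtree[OF wT nodes_pc_subtree[OF nu]] .
  have c0V: "V \<noteq> label c0" using wf_mtree_child(2)[OF w0 c0] V_def by simp
  have children: "map (\<lambda>c. tens R \<theta>x c r' f) cs = map (\<lambda>c. tens R \<theta> c r' f) cs" if "r' \<noteq> r" for r'
  proof (rule map_cong[OF refl])
    fix c assume c: "c \<in> set cs"
    have "label x \<noteq> label c0" if "x \<in> set (subtrees c)" "label x \<noteq> label c" for x
      using label_below_sibling_ne[OF w0 c c0] that by (cases "c = c0") auto
    then have "tens R \<theta>x c r' f = 1 * tens R \<theta> c r' f + 0 * tens R \<theta> c r' f"
      using \<open>r' \<noteq> r\<close> wf_mtree_child(1)[OF w0 c]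
      by (intro tens_lin_comb_top) (auto simp: \<theta>x_def upd_def)
    then show "tens R \<theta>x c r' f = tens R \<theta> c r' f" by simp
  qed
  have "\<theta>x V r' q' * prod_list (map (\<lambda>c. tens R \<theta>x c r' f) cs) =
      \<theta> V r' q' * prod_list (map (\<lambda>c. tens R \<theta> c r' f) cs)" if "q' < p" for r' q'
  proof (cases "r' = r")
    case True
    then show ?thesis using row that c0V by (simp add: \<theta>x_def upd_apply V_def)
  next
    case False
    then show ?thesis using c0V by (simp only: children[OF False]) (simp add: \<theta>x_def upd_apply)
  qed
  then show "\<forall>q'<p. tens R (upd \<theta> (label c0) i r x) (Node cs) q' f = tens R \<theta> (Node cs) q' f"
    unfolding \<theta>x_def[symmetric] by (simp only: tens.simps V_def[symmetric]) simp
qed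

lemma tens_upd_LC_entry:
  assumes "wf_mtree T" "(Node cs, p) \<in> set (nodes_pc R P T)"
    and zero: "\<forall>\<mu>' a b. (\<mu>', a, b) \<in> LC_entries R cs p r \<longrightarrow> \<theta> \<mu>' a b = 0"
    and e: "(\<mu>, i, j) \<in> LC_entries R cs p r"
    and "\<forall>n\<in>set (leaves T). f n < R {n}" "q < P"
  shows "tens R (upd \<theta> \<mu> i j x) T q f = tens R \<theta> T q f"
proof -
  have row: "\<forall>q'<p. \<theta> (label (Node cs)) r q' = 0"
    by (intro allI impI zero[rule_format]) (simp add: LC_entries_def del: label.simps)
  have cols: "\<forall>c\<in>set cs. \<forall>i'<R (label c). \<theta> (label c) i' r = 0"
    by (intro ballI allI impI zero[rule_format]) (auto simp: LC_entries_def)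
  from e consider "\<mu> = label (Node cs)" "i = r" | c where "c \<in> set cs" "\<mu> = label c" "j = r"
    unfolding LC_entries_def by blast
  then show ?thesis
    using tens_upd_LC_row[where \<theta>=\<theta>, OF assms(1,2) cols assms(5,6)]
      tens_upd_LC_col[where \<theta>=\<theta>, OF assms(1,2) _ row assms(6)]
    by cases auto
qed

section \<open>Lipschitz continuity of the hierarchical tensor\<close>

definition weights :: "(nat set \<Rightarrow> nat) \<Rightarrow> nat \<Rightarrow> mtree \<Rightarrow> (nat set \<times> nat \<times> nat) set" where
  "weights R P s = (\<Union>(s', p')\<in>set (nodes_pc R P s). {label s'} \<times> {..<R (label s')} \<times> {..<p'})"

lemma finite_weights: "finite (weights R P s)"
  unfolding weights_def by auto

lemma weights_Node:
  "weights R P (Node ds) = {label (Node ds)} \<times> {..<R (label (Node ds))} \<times> {..<P} \<union>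
     (\<Union>d\<in>set ds. weights R (R (label (Node ds))) d)"
  unfolding weights_def by (simp del: label.simps)

lemma LC_entries_subset_weights:
  assumes "(Node cs, p) \<in> set (nodes_pc R P T)" "r < R (label (Node cs))"
  shows "LC_entries R cs p r \<subseteq> weights R P T"
  using assms nodes_pc_child[OF assms(1)] unfolding LC_entries_def weights_def by fastforce

text \<open>At a node, \<open>B\<close> bounds the tensors of the children (compare with the zero weights,
  whose tensor vanishes), and the constant is the one of \<open>abs_mult_prod_list_diff_le\<close> summed
  over the R(\<nu>) summands.\<close>

fun tens_lip_const :: "(nat set \<Rightarrow> nat) \<Rightarrow> real \<Rightarrow> mtree \<Rightarrow> real" where
  "tens_lip_const R M (Leaf n) = 1"
| "tens_lip_const R M (Node cs) =
     (let K = (\<Sum>c\<in>set cs. tens_lip_const R M c); B = max 1 (K * M); n = length cs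
      in real (R (label (Node cs))) * (M * real n * B ^ n * K + B ^ n))"

lemma tens_lip_const_nonneg: "0 \<le> M \<Longrightarrow> 0 \<le> tens_lip_const R M s"
proof (induction s)
  case (Node cs)
  then have "0 \<le> (\<Sum>c\<in>set cs. tens_lip_const R M c)" by (simp add: sum_nonneg)
  then show ?case using Node.prems by (auto simp: Let_def intro!: mult_nonneg_nonneg add_nonneg_nonneg)
qed simp

lemma tens_lipschitz:
  assumes M: "0 \<le> M"
    and close: "\<forall>\<mu> i j. (\<mu>, i, j) \<in> weights R P s \<longrightarrow>
      \<bar>\<theta> \<mu> i j\<bar> \<le> M \<and> \<bar>\<theta>' \<mu> i j\<bar> \<le> M \<and> \<bar>\<theta> \<mu> i j - \<theta>' \<mu> i j\<bar> \<le> \<delta>"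
    and "0 \<le> \<delta>" "q < P" "\<forall>n\<in>set (leaves s). f n < R {n}"
  shows "\<bar>tens R \<theta> s q f - tens R \<theta>' s q f\<bar> \<le> tens_lip_const R M s * \<delta>"
  using assms(2-)
proof (induction s arbitrary: P q \<theta> \<theta>' \<delta>)
  case (Leaf m)
  then show ?case unfolding weights_def by simp
next
  case (Node ds)
  define S where "S = label (Node ds)"
  define K where "K = (\<Sum>c\<in>set ds. tens_lip_const R M c)"
  define B where "B = max 1 (K * M)"
  define n where "n = length ds"
  have top: "\<bar>\<theta> S r' q\<bar> \<le> M" "\<bar>\<theta> S r' q - \<theta>' S r' q\<bar> \<le> \<delta>" if "r' < R S" for r'
    using Node.prems(1,3) that unfolding weights_Node S_def by auto
  have child: "\<bar>tens R \<eta> d r' f - tens R \<eta>' d r' f\<bar> \<le> K * \<epsilon>"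
    if "d \<in> set ds" "r' < R S" "0 \<le> \<epsilon>"
      and "\<forall>\<mu> i j. (\<mu>, i, j) \<in> weights R (R S) d \<longrightarrow>
        \<bar>\<eta> \<mu> i j\<bar> \<le> M \<and> \<bar>\<eta>' \<mu> i j\<bar> \<le> M \<and> \<bar>\<eta> \<mu> i j - \<eta>' \<mu> i j\<bar> \<le> \<epsilon>"
    for d r' \<eta> \<eta>' \<epsilon>
  proof -
    have "\<bar>tens R \<eta> d r' f - tens R \<eta>' d r' f\<bar> \<le> tens_lip_const R M d * \<epsilon>"
      by (rule Node.IH[OF that(1,4,3,2)]) (use Node.prems(4) that(1) in auto)
    also have "\<dots> \<le> K * \<epsilon>"
      unfolding K_def using that(1,3) tens_lip_const_nonneg[OF M]
      by (intro mult_right_mono member_le_sum) auto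
    finally show ?thesis .
  qed
  have close_child: "\<forall>\<mu> i j. (\<mu>, i, j) \<in> weights R (R S) d \<longrightarrow>
      \<bar>\<theta> \<mu> i j\<bar> \<le> M \<and> \<bar>\<theta>' \<mu> i j\<bar> \<le> M \<and> \<bar>\<theta> \<mu> i j - \<theta>' \<mu> i j\<bar> \<le> \<delta>"
    if "d \<in> set ds" for d
    using Node.prems(1) that unfolding weights_Node S_def by blast
  have child_bound: "\<bar>tens R \<eta> d r' f\<bar> \<le> B"
    if "d \<in> set ds" "r' < R S" "\<forall>\<mu> i j. (\<mu>, i, j) \<in> weights R (R S) d \<longrightarrow> \<bar>\<eta> \<mu> i j\<bar> \<le> M"
    for d r' \<eta>
  proof -
    have "\<bar>tens R \<eta> d r' f - tens R (\<lambda>_ _ _. 0) d r' f\<bar> \<le> K * M"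
      by (rule child[OF that(1,2) M]) (use that(3) M in auto)
    then show ?thesis unfolding B_def tens_zero_weights by linarith
  qed
  have factors: "\<bar>tens R \<theta> d r' f\<bar> \<le> B \<and> \<bar>tens R \<theta>' d r' f\<bar> \<le> B \<and>
      \<bar>tens R \<theta> d r' f - tens R \<theta>' d r' f\<bar> \<le> K * \<delta>" if "d \<in> set ds" "r' < R S" for d r'
    using close_child[OF that(1)] by (intro conjI child_bound[OF that] child[OF that Node.prems(2)]) auto
  have B1: "1 \<le> B" unfolding B_def by simp
  have summand: "\<bar>\<theta> S r' q * prod_list (map (\<lambda>c. tens R \<theta> c r' f) ds) -
      \<theta>' S r' q * prod_list (map (\<lambda>c. tens R \<theta>' c r' f) ds)\<bar> \<le> (M * real n * B ^ n * K + B ^ n) * \<delta>"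
    if "r' < R S" for r'
  proof -
    have "\<forall>d\<in>set ds. \<bar>tens R \<theta> d r' f\<bar> \<le> B \<and> \<bar>tens R \<theta>' d r' f\<bar> \<le> B \<and>
        \<bar>tens R \<theta> d r' f - tens R \<theta>' d r' f\<bar> \<le> K * \<delta>"
      using factors[OF _ that] by blast
    from abs_mult_prod_list_diff_le[OF top[OF that] B1 this]
    show ?thesis unfolding n_def by (simp add: algebra_simps)
  qed
  have "\<bar>tens R \<theta> (Node ds) q f - tens R \<theta>' (Node ds) q f\<bar> = \<bar>\<Sum>r'<R S.
      \<theta> S r' q * prod_list (map (\<lambda>c. tens R \<theta> c r' f) ds) - \<theta>' S r' q * prod_list (map (\<lambda>c. tens R \<theta>' c r' f) ds)\<bar>"
    by (simp only: tens.simps S_def[symmetric] sum_subtractf)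
  also have "\<dots> \<le> real (card {..<R S}) * ((M * real n * B ^ n * K + B ^ n) * \<delta>)"
    by (rule order_trans[OF sum_abs sum_bounded_above]) (use summand in simp)
  finally show ?case by (simp add: Let_def S_def K_def B_def n_def mult.assoc)
qed

section \<open>The gradient flow near a vanishing local component\<close>

definition partial_deriv :: "((nat set \<Rightarrow> nat \<Rightarrow> nat \<Rightarrow> real) \<Rightarrow> real) \<Rightarrow> (nat set \<Rightarrow> nat \<Rightarrow> nat \<Rightarrow> real)
    \<Rightarrow> nat set \<Rightarrow> nat \<Rightarrow> nat \<Rightarrow> real" where
  "partial_deriv F \<theta> \<mu> i j = deriv (\<lambda>x. F (upd \<theta> \<mu> i j x)) (\<theta> \<mu> i j)"

lemma gradient_flow_has_derivative:
  assumes "gradient_flow L idx R T \<Theta>" "(\<mu>, i, j) \<in> weights R 1 T" "0 \<le> t"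
  shows "((\<lambda>s. \<Theta> s \<mu> i j) has_real_derivative - partial_deriv (phiH L idx R T) (\<Theta> t) \<mu> i j)
    (at t within {0..})"
  using assms unfolding gradient_flow_def weights_def partial_deriv_def by fastforce

lemma gradient_flow_weights_bounded:
  assumes "gradient_flow L idx R T \<Theta>"
  shows "\<exists>M. \<forall>s\<in>{0..Tm}. \<forall>\<mu> i j. (\<mu>, i, j) \<in> weights R 1 T \<longrightarrow> \<bar>\<Theta> s \<mu> i j\<bar> \<le> M"
proof -
  have "bounded ((\<lambda>s. \<Theta> s \<mu> i j) ` {0..Tm})" if "(\<mu>, i, j) \<in> weights R 1 T" for \<mu> i j
  proof -
    have "continuous_on {0..} (\<lambda>s. \<Theta> s \<mu> i j)"
      by (rule DERIV_continuous_on, rule gradient_flow_has_derivative[OF assms that]) simp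
    then have "continuous_on {0..Tm} (\<lambda>s. \<Theta> s \<mu> i j)" by (rule continuous_on_subset) auto
    then show ?thesis by (intro compact_imp_bounded compact_continuous_image compact_Icc)
  qed
  then have "bounded (\<Union>(\<mu>, i, j)\<in>weights R 1 T. (\<lambda>s. \<Theta> s \<mu> i j) ` {0..Tm})"
    by (intro bounded_UN finite_weights) auto
  then obtain M where M: "\<forall>x\<in>(\<Union>(\<mu>, i, j)\<in>weights R 1 T. (\<lambda>s. \<Theta> s \<mu> i j) ` {0..Tm}). norm x \<le> M"
    unfolding bounded_iff by blast
  show ?thesis
  proof (intro exI[of _ M] ballI allI impI)
    fix s \<mu> i j assume "s \<in> {0..Tm}" "(\<mu>, i, j) \<in> weights R 1 T"
    then have "\<Theta> s \<mu> i j \<in> (\<Union>(\<mu>, i, j)\<in>weights R 1 T. (\<lambda>s. \<Theta> s \<mu> i j) ` {0..Tm})" by force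
    then show "\<bar>\<Theta> s \<mu> i j\<bar> \<le> M" using M by fastforce
  qed
qed

lemma abs_partial_deriv_phiH_LC_le:
  fixes L :: "real^'i::finite \<Rightarrow> real" and idx :: "'i \<Rightarrow> nat \<Rightarrow> nat"
  assumes wT: "wf_mtree T" and nu: "(Node cs, p) \<in> set (nodes_pc R 1 T)"
    and L_diff: "L differentiable (at (end_tensor idx R T \<theta>))"
    and idx: "\<forall>k. \<forall>n\<in>set (leaves T). idx k n < R {n}"
    and M: "1 \<le> M" and bounded: "\<forall>\<mu>' a b. (\<mu>', a, b) \<in> weights R 1 T \<longrightarrow> \<bar>\<theta> \<mu>' a b\<bar> \<le> M"
    and small: "\<forall>\<mu>' a b. (\<mu>', a, b) \<in> LC_entries R cs p r \<longrightarrow> \<bar>\<theta> \<mu>' a b\<bar> \<le> \<delta>"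
    and e: "(\<mu>, i, j) \<in> LC_entries R cs p r"
  shows "\<bar>partial_deriv (phiH L idx R T) \<theta> \<mu> i j\<bar>
    \<le> norm (grad L (end_tensor idx R T \<theta>)) * (real CARD('i) * (2 * tens_lip_const R M T * \<delta>))"
proof -
  define K where "K = tens_lip_const R M T"
  \<comment> \<open>At \<open>\<theta>0\<close>, which is \<open>\<delta>\<close>-close to \<open>\<theta>\<close>, the slope of the end tensor in the direction of
    the entry vanishes.\<close>
  define \<theta>0 where "\<theta>0 \<mu>' a b = (if (\<mu>', a, b) \<in> LC_entries R cs p r then 0 else \<theta> \<mu>' a b)" for \<mu>' a b
  define A where "A = end_tensor idx R T (upd \<theta> \<mu> i j 0)"
  define B where "B = end_tensor idx R T (upd \<theta> \<mu> i j 1) - A"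
  have \<delta>: "0 \<le> \<delta>" using small e by force
  obtain u P' where u: "(u, P') \<in> set (nodes_pc R 1 T)" "\<mu> = label u"
    using e nu nodes_pc_child[OF nu] unfolding LC_entries_def by blast
  have line: "end_tensor idx R T (upd \<theta> \<mu> i j x) = A + x *\<^sub>R B" for x
    unfolding A_def B_def end_tensor_def vec_eq_iff u(2)
    using tens_upd_affine[OF wT u(1) zero_less_one] by (simp add: algebra_simps)
  have "A + \<theta> \<mu> i j *\<^sub>R B = end_tensor idx R T \<theta>"
    using line[of "\<theta> \<mu> i j"] by (simp add: upd_triv)
  then have "partial_deriv (phiH L idx R T) \<theta> \<mu> i j = frechet_derivative L (at (end_tensor idx R T \<theta>)) B"
    using deriv_along_line[of L A "\<theta> \<mu> i j" B] L_diff unfolding partial_deriv_def phiH_def line by simp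
  also have "\<bar>\<dots>\<bar> \<le> norm (grad L (end_tensor idx R T \<theta>)) * norm B"
    using L_diff by (rule abs_frechet_derivative_le)
  also have "norm B \<le> real CARD('i) * (2 * K * \<delta>)"
  proof (rule norm_le_card_mult_cart, rule allI)
    fix k
    have close: "\<bar>tens R (upd \<theta> \<mu> i j x) T 0 (idx k) - tens R \<theta>0 T 0 (idx k)\<bar> \<le> K * \<delta>"
      if "\<bar>x\<bar> \<le> 1" for x
    proof -
      have "tens R (upd \<theta>0 \<mu> i j x) T 0 (idx k) = tens R \<theta>0 T 0 (idx k)"
        using idx e by (intro tens_upd_LC_entry[OF wT nu]) (auto simp: \<theta>0_def)
      moreover have "\<bar>tens R (upd \<theta> \<mu> i j x) T 0 (idx k) - tens R (upd \<theta>0 \<mu> i j x) T 0 (idx k)\<bar> \<le> K * \<delta>"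
        unfolding K_def using M bounded small that \<delta> idx
        by (intro tens_lipschitz) (auto simp: upd_apply \<theta>0_def)
      ultimately show ?thesis by simp
    qed
    have "B $ k = tens R (upd \<theta> \<mu> i j 1) T 0 (idx k) - tens R (upd \<theta> \<mu> i j 0) T 0 (idx k)"
      unfolding B_def A_def end_tensor_def by simp
    then show "\<bar>B $ k\<bar> \<le> 2 * K * \<delta>" using close[of 0] close[of 1] by simp
  qed
  then have "norm (grad L (end_tensor idx R T \<theta>)) * norm B
      \<le> norm (grad L (end_tensor idx R T \<theta>)) * (real CARD('i) * (2 * K * \<delta>))"
    by (simp add: mult_left_mono)
  finally show ?thesis unfolding K_def .
qed

lemma LC_partial_deriv_bound:
  fixes L :: "real^'i::finite \<Rightarrow> real" and idx :: "'i \<Rightarrow> nat \<Rightarrow> nat"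
  assumes wT: "wf_mtree T" and nu: "(Node cs, p) \<in> set (nodes_pc R 1 T)"
    and L_diff: "\<forall>x. L differentiable (at x)"
    and L_smooth: "\<forall>K. compact K \<longrightarrow> (\<exists>C. lipschitz_on C K (grad L))"
    and idx: "\<forall>k. \<forall>n\<in>set (leaves T). idx k n < R {n}"
  shows "\<exists>C. \<forall>\<theta> \<delta> \<mu> i j. (\<forall>\<mu>' a b. (\<mu>', a, b) \<in> weights R 1 T \<longrightarrow> \<bar>\<theta> \<mu>' a b\<bar> \<le> M) \<longrightarrow>
    (\<forall>\<mu>' a b. (\<mu>', a, b) \<in> LC_entries R cs p r \<longrightarrow> \<bar>\<theta> \<mu>' a b\<bar> \<le> \<delta>) \<longrightarrow>
    (\<mu>, i, j) \<in> LC_entries R cs p r \<longrightarrow> \<bar>partial_deriv (phiH L idx R T) \<theta> \<mu> i j\<bar> \<le> C * \<delta>"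
proof -
  define M1 where "M1 = max 1 M"
  define K where "K = tens_lip_const R M1 T"
  have K: "0 \<le> K" unfolding K_def M1_def by (simp add: tens_lip_const_nonneg)
  obtain G where G: "\<forall>y\<in>cball 0 (real CARD('i) * (K * M1)). norm (grad L y) \<le> G"
    using bounded_image_if_lipschitz_on_compacts[OF L_smooth compact_cball] unfolding bounded_iff by blast
  show ?thesis
  proof (intro exI[of _ "G * (real CARD('i) * (2 * K))"] allI impI)
    fix \<theta> \<delta> \<mu> i j
    assume bounded: "\<forall>\<mu>' a b. (\<mu>', a, b) \<in> weights R 1 T \<longrightarrow> \<bar>\<theta> \<mu>' a b\<bar> \<le> M"
      and small: "\<forall>\<mu>' a b. (\<mu>', a, b) \<in> LC_entries R cs p r \<longrightarrow> \<bar>\<theta> \<mu>' a b\<bar> \<le> \<delta>"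
      and e: "(\<mu>, i, j) \<in> LC_entries R cs p r"
    have bounded1: "\<forall>\<mu>' a b. (\<mu>', a, b) \<in> weights R 1 T \<longrightarrow> \<bar>\<theta> \<mu>' a b\<bar> \<le> M1"
      using bounded unfolding M1_def by force
    have "\<bar>tens R \<theta> T 0 (idx k) - tens R (\<lambda>_ _ _. 0) T 0 (idx k)\<bar> \<le> K * M1" for k
      unfolding K_def using bounded1 idx by (intro tens_lipschitz) (auto simp: M1_def)
    then have "norm (end_tensor idx R T \<theta>) \<le> real CARD('i) * (K * M1)"
      unfolding end_tensor_def tens_zero_weights by (intro norm_le_card_mult_cart) simp
    then have "norm (grad L (end_tensor idx R T \<theta>)) \<le> G" using G by simp
    moreover have "0 \<le> \<delta>" using small e by force
    moreover have "\<bar>partial_deriv (phiH L idx R T) \<theta> \<mu> i j\<bar>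
        \<le> norm (grad L (end_tensor idx R T \<theta>)) * (real CARD('i) * (2 * K * \<delta>))"
      unfolding K_def using L_diff M1_def by (intro abs_partial_deriv_phiH_LC_le[OF wT nu _ idx _ bounded1 small e]) auto
    ultimately show "\<bar>partial_deriv (phiH L idx R T) \<theta> \<mu> i j\<bar> \<le> G * (real CARD('i) * (2 * K)) * \<delta>"
      using K by (smt (verit, best) mult.assoc mult_right_mono zero_le_mult_iff of_nat_0_le_iff)
  qed
qed

lemma gradient_flow_LC_zero_persists:
  fixes L :: "real^'i::finite \<Rightarrow> real" and idx :: "'i \<Rightarrow> nat \<Rightarrow> nat"
  assumes wT: "wf_mtree T" and idx: "\<forall>k. \<forall>n\<in>set (leaves T). idx k n < R {n}"
    and L_diff: "\<forall>x. L differentiable (at x)"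
    and L_smooth: "\<forall>K. compact K \<longrightarrow> (\<exists>C. lipschitz_on C K (grad L))"
    and flow: "gradient_flow L idx R T \<Theta>"
    and nu: "(Node cs, p) \<in> set (nodes_pc R 1 T)" and r: "r < R (label (Node cs))"
    and t0: "0 \<le> t0" "LC_zero R (\<Theta> t0) cs p r" and t: "0 \<le> t"
  shows "LC_zero R (\<Theta> t) cs p r"
  unfolding LC_zero_iff
proof (intro allI impI)
  fix \<mu> i j assume e: "(\<mu>, i, j) \<in> LC_entries R cs p r"
  have LC_weights: "LC_entries R cs p r \<subseteq> weights R 1 T" using LC_entries_subset_weights[OF nu r] .
  define Tm where "Tm = max t t0"
  obtain M where M: "\<forall>s\<in>{0..Tm}. \<forall>\<mu> i j. (\<mu>, i, j) \<in> weights R 1 T \<longrightarrow> \<bar>\<Theta> s \<mu> i j\<bar> \<le> M"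
    using gradient_flow_weights_bounded[OF flow] by blast
  obtain C where C: "\<forall>\<theta> \<delta> \<mu> i j. (\<forall>\<mu>' a b. (\<mu>', a, b) \<in> weights R 1 T \<longrightarrow> \<bar>\<theta> \<mu>' a b\<bar> \<le> M) \<longrightarrow>
      (\<forall>\<mu>' a b. (\<mu>', a, b) \<in> LC_entries R cs p r \<longrightarrow> \<bar>\<theta> \<mu>' a b\<bar> \<le> \<delta>) \<longrightarrow>
      (\<mu>, i, j) \<in> LC_entries R cs p r \<longrightarrow> \<bar>partial_deriv (phiH L idx R T) \<theta> \<mu> i j\<bar> \<le> C * \<delta>"
    using LC_partial_deriv_bound[OF wT nu L_diff L_smooth idx] by blast
  define X where "X s = (\<lambda>(\<mu>, i, j). \<Theta> s \<mu> i j)" for s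
  define X' where "X' s = (\<lambda>(\<mu>, i, j). - partial_deriv (phiH L idx R T) (\<Theta> s) \<mu> i j)" for s
  have "X t (\<mu>, i, j) = 0"
  proof (rule vanishes_if_abs_deriv_le_norm[OF finite_LC_entries, where X = X and X' = X' and Tm = Tm])
    show "((\<lambda>s. X s a) has_real_derivative X' s' a) (at s' within {0..})"
      if "a \<in> LC_entries R cs p r" "0 \<le> s'" for a s'
      using that LC_weights gradient_flow_has_derivative[OF flow] unfolding X_def X'_def by (cases a) auto
    show "\<bar>X' s a\<bar> \<le> C * sqrt (\<Sum>b\<in>LC_entries R cs p r. (X s b)\<^sup>2)"
      if "a \<in> LC_entries R cs p r" "0 \<le> s" "s \<le> Tm" for a s
      using that M LC_weights abs_le_sqrt_sum_squares[OF finite_LC_entries, where f = "X s"] C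
      unfolding X_def X'_def by (cases a) auto
    show "X t0 a = 0" if "a \<in> LC_entries R cs p r" for a
      using t0(2) that unfolding LC_zero_iff X_def by (cases a) auto
  qed (use t e t0(1) in \<open>auto simp: Tm_def\<close>)
  then show "\<Theta> t \<mu> i j = 0" by (simp add: X_def)
qed

theorem lemma14:
  fixes N :: nat and D :: "nat \<Rightarrow> nat" and T :: mtree and R :: "nat set \<Rightarrow> nat"
    and idx :: "'i::finite \<Rightarrow> nat \<Rightarrow> nat"
    and L :: "real^'i \<Rightarrow> real"
    and \<Theta> :: "real \<Rightarrow> nat set \<Rightarrow> nat \<Rightarrow> nat \<Rightarrow> real"
    and cs :: "mtree list" and p r :: nat and t0 :: real
  assumes N_pos: "N \<ge> 1"
    and D_pos: "\<forall>n\<in>{1..N}. D n \<ge> 1"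
    and tree: "mode_tree N T"
    and R_int: "\<forall>cs'. Node cs' \<in> set (subtrees T) \<longrightarrow> R (label (Node cs')) \<ge> 1"
    and R_leaf: "\<forall>n\<in>{1..N}. R {n} = D n"
    and idx_bij: "bij_betw idx UNIV (idx_set N D)"
    and L_nonneg: "\<forall>x. L x \<ge> 0"
    and L_diff: "\<forall>x. L differentiable (at x)"
    and L_smooth: "\<forall>K. compact K \<longrightarrow> (\<exists>C. lipschitz_on C K (grad L))"
    and flow: "gradient_flow L idx R T \<Theta>"
    and nu: "(Node cs, p) \<in> set (nodes_pc R 1 T)"
    and r: "r < R (label (Node cs))"
    and t0: "t0 \<ge> 0" "LC_zero R (\<Theta> t0) cs p r"
  shows "\<forall>t\<ge>0. LC_zero R (\<Theta> t) cs p r"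
proof -
  have "\<forall>k. \<forall>n\<in>set (leaves T). idx k n < R {n}"
    using bij_betwE[OF idx_bij] R_leaf mode_tree_leaves[OF tree] unfolding idx_set_def by auto
  with mode_tree_wf[OF tree] show ?thesis
    using gradient_flow_LC_zero_persists[OF _ _ L_diff L_smooth flow nu r t0] by blast
qed

end
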